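(* Let $\alpha\in\mathbb N=\{1,2,\ldots\}$ and define the real-valued measure $$\mu_\alpha=(1-q^\alpha)\sum_{k=0}^\infty q^{\alpha k}\delta_{q^k/\phi}.$$ Then $\mu_\alpha$ has total mass $1$ and for every $n\ge 0$, $$\int x^n\,d\mu_\alpha(x)=\frac{F_\alpha}{F_{\alpha+n}}.$$ Moreover $\mu_\alpha$ is a positive (probability) measure when $\alpha$ is even. In particular, $(1/F_{n+2})_{n\ge 0}$ is the moment sequence of the probability measure $\mu_2=(1-q^2)\sum_{k\ge 0}q^{2k}\delta_{q^k/\phi}$.
   Context: $F_n$ denotes the Fibonacci numbers: $F_0=0$, $F_1=1$, $F_{n+1}=F_n+F_{n-1}$. $\phi=(1+\sqrt5)/2$ and $q=(1-\sqrt5)/(1+\sqrt5)=1/\phi-1$, so $-1<q<0$. $\delta_a$ denotes the unit point mass at $a$. *)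

theory Defs
  imports "HOL-Probability.Probability" "HOL-Number_Theory.Fib"
begin

definition gphi :: real where "gphi = (1 + sqrt 5) / 2"

definition qq :: real where "qq = (1 - sqrt 5) / (1 + sqrt 5)"

text \<open>The (signed) discrete measure mu_alpha = (1 - q^alpha) * sum_k q^(alpha k) delta_(q^k/phi),
  represented by its weights and atoms.\<close>
definition mu_weight :: "nat \<Rightarrow> nat \<Rightarrow> real" where
  "mu_weight \<alpha> k = (1 - qq ^ \<alpha>) * qq ^ (\<alpha> * k)"

definition mu_atom :: "nat \<Rightarrow> real" where
  "mu_atom k = qq ^ k / gphi"

text \<open>As an (ennreal-valued) measure on the reals: meaningful when all weights are nonnegative.\<close>
definition mu_measure :: "nat \<Rightarrow> real measure" where
  "mu_measure \<alpha> = distr (density (count_space UNIV) (\<lambda>k. ennreal (mu_weight \<alpha> k))) borel mu_atom"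

end

theory Submission
  imports Defs
begin

text \<open>With \<open>\<psi> = (1 - sqrt 5)/2 = q \<phi>\<close>, Binet's formula reads \<open>F\<^sub>m = \<phi>\<^sup>m (1 - q\<^sup>m) / sqrt 5\<close>.
  The \<open>n\<close>-th moment of \<open>\<mu>\<^sub>\<alpha>\<close> is a geometric series with ratio \<open>q\<^sup>\<alpha>\<^sup>+\<^sup>n\<close>, summing to
  \<open>(1 - q\<^sup>\<alpha>) / (\<phi>\<^sup>n (1 - q\<^sup>\<alpha>\<^sup>+\<^sup>n))\<close>, which by Binet is \<open>F\<^sub>\<alpha> / F\<^sub>\<alpha>\<^sub>+\<^sub>n\<close>. For even \<open>\<alpha>\<close> the weights
  are nonnegative, so \<open>\<mu>\<^sub>\<alpha>\<close> is a genuine probability measure whose moments are these series.\<close>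

definition discrete_measure :: "(nat \<Rightarrow> real) \<Rightarrow> (nat \<Rightarrow> 'a::topological_space) \<Rightarrow> 'a measure" where
  "discrete_measure w a = distr (density (count_space UNIV) (\<lambda>k. ennreal (w k))) borel a"

lemma emeasure_discrete_measure_space:
  assumes "\<And>k. w k \<ge> 0" and "w sums s"
  shows "emeasure (discrete_measure w a) (space (discrete_measure w a)) = ennreal s"
proof -
  have "emeasure (discrete_measure w a) (space (discrete_measure w a))
      = emeasure (density (count_space UNIV) (\<lambda>k. ennreal (w k))) UNIV"
    unfolding discrete_measure_def by (subst emeasure_distr) auto
  also have "\<dots> = (\<Sum>k. ennreal (w k))"
    by (simp add: emeasure_density nn_integral_count_space_nat)
  also have "\<dots> = ennreal s"
    using assms by (rule suminf_ennreal_eq)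
  finally show ?thesis .
qed

lemma prob_space_discrete_measure:
  assumes "\<And>k. w k \<ge> 0" and "w sums 1"
  shows "prob_space (discrete_measure w a)"
  by (rule prob_spaceI) (simp add: emeasure_discrete_measure_space[OF assms])

lemma
  fixes f :: "'a::topological_space \<Rightarrow> real"
  assumes w_nonneg: "\<And>k. w k \<ge> 0" and "summable w"
    and f_measurable: "f \<in> borel_measurable borel" and f_bounded: "\<And>k. \<bar>f (a k)\<bar> \<le> B"
  shows integrable_discrete_measure: "integrable (discrete_measure w a) f"
    and integral_discrete_measure: "(\<integral>x. f x \<partial>discrete_measure w a) = (\<Sum>k. w k * f (a k))"
proof -
  let ?D = "density (count_space UNIV) (\<lambda>k. ennreal (w k))"
  have "summable (\<lambda>k. \<bar>w k * f (a k)\<bar>)"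
  proof (rule summable_comparison_test')
    show "summable (\<lambda>k. B * w k)"
      using \<open>summable w\<close> by (rule summable_mult)
    show "norm \<bar>w k * f (a k)\<bar> \<le> B * w k" for k
      using mult_left_mono[OF f_bounded[of k] w_nonneg[of k]] w_nonneg[of k]
      by (simp add: abs_mult mult.commute)
  qed
  then have integrable_weighted: "integrable (count_space UNIV) (\<lambda>k. w k * f (a k))"
    by (simp add: integrable_count_space_nat_iff)
  then have "integrable ?D (\<lambda>k. f (a k))"
    by (subst integrable_density) (use w_nonneg in auto)
  then show "integrable (discrete_measure w a) f"
    unfolding discrete_measure_def by (subst integrable_distr_eq) (use f_measurable in auto)
  have "(\<integral>x. f x \<partial>discrete_measure w a) = (\<integral>k. f (a k) \<partial>?D)"
    unfolding discrete_measure_def by (subst integral_distr) (use f_measurable in auto)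
  also have "\<dots> = (\<integral>k. w k * f (a k) \<partial>count_space UNIV)"
    by (subst integral_density) (use w_nonneg in auto)
  also have "\<dots> = (\<Sum>k. w k * f (a k))"
    using integrable_weighted by (rule integral_count_space_nat)
  finally show "(\<integral>x. f x \<partial>discrete_measure w a) = (\<Sum>k. w k * f (a k))" .
qed

lemma geometric_moment_term_eq:
  fixes r c :: "'a::field"
  shows "(1 - r ^ \<alpha>) * r ^ (\<alpha> * k) * (r ^ k / c) ^ n = (1 - r ^ \<alpha>) / c ^ n * (r ^ (\<alpha> + n)) ^ k"
proof -
  have "(r ^ (\<alpha> + n)) ^ k = r ^ (\<alpha> * k) * (r ^ k) ^ n"
    by (simp add: power_mult[symmetric] power_add[symmetric] algebra_simps)
  then show ?thesis
    by (simp add: power_divide)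
qed

lemma geometric_moment_sums:
  fixes r c :: real
  assumes "\<bar>r\<bar> < 1" and "\<alpha> + n > 0"
  shows "(\<lambda>k. (1 - r ^ \<alpha>) * r ^ (\<alpha> * k) * (r ^ k / c) ^ n)
           sums ((1 - r ^ \<alpha>) / (c ^ n * (1 - r ^ (\<alpha> + n))))"
proof -
  have "\<bar>r ^ (\<alpha> + n)\<bar> < 1"
    using assms by (simp add: power_abs power_less_one_iff)
  then have "(\<lambda>k. (1 - r ^ \<alpha>) / c ^ n * (r ^ (\<alpha> + n)) ^ k)
               sums ((1 - r ^ \<alpha>) / c ^ n * (1 / (1 - r ^ (\<alpha> + n))))"
    by (intro sums_mult geometric_sums) simp
  then show ?thesis
    by (simp add: geometric_moment_term_eq)
qed

lemma gphi_gt_1: "gphi > 1"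
  unfolding gphi_def by (simp add: real_less_rsqrt)

lemma qq_bounds: "-1 < qq" "qq < 0"
  unfolding qq_def by (simp_all add: divide_less_0_iff real_less_rsqrt pos_less_divide_eq add_pos_nonneg)

lemma abs_qq_less_1: "\<bar>qq\<bar> < 1"
  using qq_bounds by linarith

lemma fib_eq_gphi_qq: "real (fib m) = gphi ^ m * (1 - qq ^ m) / sqrt 5"
proof -
  have "1 + sqrt 5 > 0"
    using real_sqrt_ge_zero[of 5] by linarith
  then have psi_eq: "(1 - sqrt 5) / 2 = qq * gphi"
    unfolding qq_def gphi_def by simp
  have "((1 - sqrt 5) / 2) ^ m = qq ^ m * gphi ^ m"
    unfolding psi_eq by (rule power_mult_distrib)
  then show ?thesis
    unfolding fib_closed_form gphi_def by (simp add: algebra_simps)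
qed

lemma fib_ratio_eq:
  assumes "\<alpha> + n > 0"
  shows "real (fib \<alpha>) / real (fib (\<alpha> + n)) = (1 - qq ^ \<alpha>) / (gphi ^ n * (1 - qq ^ (\<alpha> + n)))"
proof -
  have "\<bar>qq ^ (\<alpha> + n)\<bar> < 1"
    using abs_qq_less_1 assms by (simp add: power_abs power_less_one_iff)
  then have "1 - qq ^ (\<alpha> + n) \<noteq> 0"
    by auto
  then show ?thesis
    using gphi_gt_1 unfolding fib_eq_gphi_qq by (simp add: field_simps power_add)
qed

lemma mu_moment_sums:
  assumes "\<alpha> + n > 0"
  shows "(\<lambda>k. mu_weight \<alpha> k * mu_atom k ^ n) sums (real (fib \<alpha>) / real (fib (\<alpha> + n)))"
  using geometric_moment_sums[OF abs_qq_less_1 assms, of gphi]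
  unfolding fib_ratio_eq[OF assms] mu_weight_def mu_atom_def .

lemma mu_weight_sums:
  assumes "\<alpha> \<ge> 1"
  shows "mu_weight \<alpha> sums 1"
proof -
  have "fib \<alpha> > 0"
    using assms fib_neq_0_nat by simp
  then show ?thesis
    using mu_moment_sums[of \<alpha> 0] assms by simp
qed

lemma mu_weight_nonneg:
  assumes "even \<alpha>"
  shows "mu_weight \<alpha> k \<ge> 0"
proof -
  have "\<bar>qq\<bar> ^ \<alpha> \<le> 1"
    using abs_qq_less_1 by (simp add: power_le_one)
  then have "qq ^ \<alpha> \<le> 1"
    using assms by (simp add: power_even_abs)
  moreover have "qq ^ (\<alpha> * k) \<ge> 0"
    using assms by (simp add: zero_le_even_power)
  ultimately show ?thesis
    unfolding mu_weight_def by simp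
qed

lemma abs_mu_atom_le_1: "\<bar>mu_atom k\<bar> \<le> 1"
proof -
  have "\<bar>qq\<bar> ^ k \<le> 1"
    using abs_qq_less_1 by (simp add: power_le_one)
  then have "\<bar>qq ^ k\<bar> \<le> \<bar>gphi\<bar>"
    using gphi_gt_1 by (simp add: power_abs)
  then show ?thesis
    unfolding mu_atom_def abs_divide using gphi_gt_1 by (simp add: divide_le_eq_1_pos)
qed

lemma mu_measure_eq: "mu_measure \<alpha> = discrete_measure (mu_weight \<alpha>) mu_atom"
  unfolding mu_measure_def discrete_measure_def ..

lemma
  assumes "\<alpha> \<ge> 1" and "even \<alpha>"
  shows prob_space_mu_measure: "prob_space (mu_measure \<alpha>)"
    and integrable_mu_measure_power: "integrable (mu_measure \<alpha>) (\<lambda>x. x ^ n)"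
    and integral_mu_measure_power: "(\<integral>x. x ^ n \<partial>mu_measure \<alpha>) = real (fib \<alpha>) / real (fib (\<alpha> + n))"
proof -
  note weights = mu_weight_nonneg[OF \<open>even \<alpha>\<close>] mu_weight_sums[OF \<open>\<alpha> \<ge> 1\<close>]
  have power_measurable: "(\<lambda>x::real. x ^ n) \<in> borel_measurable borel"
    by measurable
  have "\<bar>mu_atom k ^ n\<bar> \<le> 1" for k
    using abs_mu_atom_le_1 by (simp add: power_abs power_le_one)
  note power_bounded = weights(1) sums_summable[OF weights(2)] power_measurable this
  show "prob_space (mu_measure \<alpha>)"
    unfolding mu_measure_eq using weights by (rule prob_space_discrete_measure)
  show "integrable (mu_measure \<alpha>) (\<lambda>x. x ^ n)"
    unfolding mu_measure_eq using power_bounded by (rule integrable_discrete_measure)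
  have "(\<integral>x. x ^ n \<partial>mu_measure \<alpha>) = (\<Sum>k. mu_weight \<alpha> k * mu_atom k ^ n)"
    unfolding mu_measure_eq using power_bounded by (rule integral_discrete_measure)
  also have "\<dots> = real (fib \<alpha>) / real (fib (\<alpha> + n))"
    using mu_moment_sums[of \<alpha> n] \<open>\<alpha> \<ge> 1\<close> by (simp add: sums_iff)
  finally show "(\<integral>x. x ^ n \<partial>mu_measure \<alpha>) = real (fib \<alpha>) / real (fib (\<alpha> + n))" .
qed

theorem mainTheorem2:
  fixes \<alpha> :: nat
  assumes "\<alpha> \<ge> 1"
  shows "mu_weight \<alpha> sums 1
    \<and> (\<forall>n::nat. (\<lambda>k. mu_weight \<alpha> k * mu_atom k ^ n) sums (real (fib \<alpha>) / real (fib (\<alpha> + n))))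
    \<and> (even \<alpha> \<longrightarrow>
        (\<forall>k. mu_weight \<alpha> k \<ge> 0) \<and> prob_space (mu_measure \<alpha>)
        \<and> (\<forall>n::nat. integrable (mu_measure \<alpha>) (\<lambda>x. x ^ n)
              \<and> (\<integral>x. x ^ n \<partial>mu_measure \<alpha>) = real (fib \<alpha>) / real (fib (\<alpha> + n))))
    \<and> (\<forall>n::nat. (\<integral>x. x ^ n \<partial>mu_measure 2) = 1 / real (fib (n + 2)))"
proof -
  have moments: "(\<lambda>k. mu_weight \<alpha> k * mu_atom k ^ n) sums (real (fib \<alpha>) / real (fib (\<alpha> + n)))" for n
    using assms by (intro mu_moment_sums) simp
  have mu_2_moments: "(\<integral>x. x ^ n \<partial>mu_measure 2) = 1 / real (fib (n + 2))" for n
    using integral_mu_measure_power[of 2 n] by (simp add: add.commute)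
  show ?thesis
    using mu_weight_sums[OF assms] moments mu_2_moments mu_weight_nonneg
      prob_space_mu_measure[OF assms] integrable_mu_measure_power[OF assms]
      integral_mu_measure_power[OF assms]
    by simp
qed

end
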